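(* Let $T>0$, $f:\mathbb{R}\times[0,\infty)\to\mathbb{R}$ locally H\"older continuous, $C^1$ in $u$, with $f(t,0)=0$ and $f(t+T,u)=f(t,u)$. Let $u_0\in L^\infty(\mathbb{R})$ be nonnegative with compact support and let $u$, the solution of $u_t=u_{xx}+f(t,u)$, $u(\cdot,0)=u_0$, be bounded. Let $x_0$ be a point such that every $v\in\widetilde{\omega}(u)$ satisfies $v(2x_0-x,t)=v(x,t)$ for all $x,t$ and $v_x(x,t)\ge0$ for $x<x_0$, $v_x(x,t)\le0$ for $x>x_0$. Then every $v\in\widetilde{\omega}(u)$ is either symmetrically decreasing with respect to $x_0$ or spatially homogeneous ($v=v(t)$).
   Context: $\widetilde{\omega}(u)$ is the set of entire solutions $v$ of $v_t=v_{xx}+f(t,v)$ on $\mathbb{R}^2$ such that $u(x,t+k_jT)\to v(x,t)$ locally uniformly for some positive integers $k_j\to\infty$. $v$ is symmetrically decreasing w.r.t. $x_0$ if $v(2x_0-x,t)=v(x,t)$ and $v_x(x,t)<0$ for all $x>x_0$, $t\in\mathbb{R}$. *)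

theory Defs
  imports "HOL-Analysis.Analysis"
begin

text \<open>Functions of space and time are written as curried functions v x t
  (first argument: space x, second: time t). The nonlinearity is f t w.\<close>

definition locally_hoelder_on :: "(real \<times> real) set \<Rightarrow> (real \<Rightarrow> real \<Rightarrow> real) \<Rightarrow> bool" where
  "locally_hoelder_on S f \<longleftrightarrow>
     (\<forall>K. compact K \<and> K \<subseteq> S \<longrightarrow>
        (\<exists>\<alpha> C. 0 < \<alpha> \<and> \<alpha> \<le> 1 \<and>
           (\<forall>p\<in>K. \<forall>q\<in>K. \<bar>f (fst p) (snd p) - f (fst q) (snd q)\<bar> \<le> C * dist p q powr \<alpha>)))"

definition C1_in_u :: "(real \<Rightarrow> real \<Rightarrow> real) \<Rightarrow> bool" where
  "C1_in_u f \<longleftrightarrow>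
     (\<exists>fu. (\<forall>t w. w \<ge> 0 \<longrightarrow> ((\<lambda>z. f t z) has_real_derivative fu t w) (at w within {0..}))
        \<and> continuous_on (UNIV \<times> {0..}) (\<lambda>(t, w). fu t w))"

definition classical_solution_on ::
  "(real \<Rightarrow> real \<Rightarrow> real) \<Rightarrow> (real \<times> real) set \<Rightarrow> (real \<Rightarrow> real \<Rightarrow> real) \<Rightarrow> bool" where
  "classical_solution_on f S v \<longleftrightarrow>
     (\<exists>vx vxx vt.
        (\<forall>(x, t)\<in>S.
            ((\<lambda>y. v y t) has_real_derivative vx x t) (at x)
          \<and> ((\<lambda>y. vx y t) has_real_derivative vxx x t) (at x)
          \<and> ((\<lambda>s. v x s) has_real_derivative vt x t) (at t)
          \<and> vt x t = vxx x t + f t (v x t)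
          \<and> v x t \<ge> 0)
      \<and> continuous_on S (\<lambda>(x, t). v x t)
      \<and> continuous_on S (\<lambda>(x, t). vx x t)
      \<and> continuous_on S (\<lambda>(x, t). vxx x t)
      \<and> continuous_on S (\<lambda>(x, t). vt x t))"

text \<open>u solves the Cauchy problem u_t = u_xx + f(t,u) for t > 0, u(.,0) = u0,
  the initial datum being attained in L^1_loc (standard for L^infinity data).\<close>
definition solves_cauchy ::
  "(real \<Rightarrow> real \<Rightarrow> real) \<Rightarrow> (real \<Rightarrow> real) \<Rightarrow> (real \<Rightarrow> real \<Rightarrow> real) \<Rightarrow> bool" where
  "solves_cauchy f u0 u \<longleftrightarrow>
     classical_solution_on f (UNIV \<times> {0<..}) u
   \<and> (\<forall>R. ((\<lambda>t. LINT x:{-R..R}|lborel. \<bar>u x t - u0 x\<bar>) \<longlongrightarrow> 0) (at_right 0))"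

definition entire_solution :: "(real \<Rightarrow> real \<Rightarrow> real) \<Rightarrow> (real \<Rightarrow> real \<Rightarrow> real) \<Rightarrow> bool" where
  "entire_solution f v \<longleftrightarrow> classical_solution_on f UNIV v"

definition omega_tilde ::
  "(real \<Rightarrow> real \<Rightarrow> real) \<Rightarrow> real \<Rightarrow> (real \<Rightarrow> real \<Rightarrow> real) \<Rightarrow> (real \<Rightarrow> real \<Rightarrow> real) set" where
  "omega_tilde f T u =
     {v. entire_solution f v \<and>
         (\<exists>k :: nat \<Rightarrow> nat. (\<forall>j. 0 < k j) \<and> filterlim k at_top sequentially \<and>
            (\<forall>K :: (real \<times> real) set. compact K \<longrightarrow>
               (\<forall>e>0. \<forall>\<^sub>F j in sequentially. \<forall>(x, t)\<in>K. \<bar>u x (t + real (k j) * T) - v x t\<bar> < e)))}"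

definition sym_decreasing :: "(real \<Rightarrow> real \<Rightarrow> real) \<Rightarrow> real \<Rightarrow> bool" where
  "sym_decreasing v x0 \<longleftrightarrow>
     (\<forall>x t. v (2 * x0 - x) t = v x t) \<and> (\<forall>x t. x > x0 \<longrightarrow> deriv (\<lambda>y. v y t) x < 0)"

end

(* Suppose v_x vanishes at some (x1, t1) with x1 > x0. By monotonicity and symmetry, v dominates
   its reflection in x1 on x <= x1, and since f is Lipschitz along v the difference satisfies a
   linear parabolic inequality. Hopf's lemma at x1 and the strong maximum principle then force the
   difference to vanish at x0 for all t <= t1, so v(., t) is constant on [x0, 2 x1 - x0]; as the
   right end point is again critical, doubling the interval shows that v(., t) is constant for
   t <= t1. Uniqueness of bounded solutions, applied to the spatial translates of v, carries this
   to all later times. *)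

theory Submission
  imports Defs
begin

section \<open>Calculus\<close>

lemma DERIV_reflect:
  fixes f :: "real \<Rightarrow> real"
  assumes "(f has_real_derivative D) (at (2 * c - x))"
  shows "((\<lambda>y. f (2 * c - y)) has_real_derivative - D) (at x)"
proof -
  have "((\<lambda>y. 2 * c - y) has_real_derivative -1) (at x)"
    by (auto intro!: derivative_eq_intros)
  from DERIV_chain2[where f = f and g = "\<lambda>y. 2 * c - y", OF assms this] show ?thesis
    by simp
qed

lemma isCont_gt_on_ball:
  fixes g :: "real \<Rightarrow> real"
  assumes "isCont g x" "m < g x"
  obtains r where "0 < r" "\<And>y. \<bar>y - x\<bar> < r \<Longrightarrow> m < g y"
proof -
  have "\<forall>\<^sub>F y in nhds x. m < g y"
    using order_tendstoD(1)[OF assms(1)[unfolded isCont_def tendsto_at_iff_tendsto_nhds] assms(2)] .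
  then show ?thesis
    using that unfolding eventually_nhds_metric dist_real_def by blast
qed

lemma continuous_on_Icc_positive_lower_bound:
  fixes g :: "real \<Rightarrow> real"
  assumes "continuous_on {a..b} g" "\<And>s. s \<in> {a..b} \<Longrightarrow> 0 < g s"
  obtains m where "0 < m" "\<And>s. s \<in> {a..b} \<Longrightarrow> m \<le> g s"
proof (cases "{a..b} = {}")
  case False
  then obtain s0 where "s0 \<in> {a..b}" "\<And>s. s \<in> {a..b} \<Longrightarrow> g s0 \<le> g s"
    using continuous_attains_inf[OF compact_Icc _ assms(1)] by blast
  then show ?thesis
    using that[of "g s0"] assms(2) by blast
qed (use that[of 1] in simp)

lemma DERIV_nonneg_at_left_max:
  fixes p :: "real \<Rightarrow> real"
  assumes "(p has_real_derivative D) (at x)" "0 < d"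
    and "\<And>y. x - d < y \<Longrightarrow> y < x \<Longrightarrow> p y \<le> p x"
  shows "0 \<le> D"
proof (rule ccontr)
  assume "\<not> 0 \<le> D"
  then obtain e where "0 < e" "\<And>h. 0 < h \<Longrightarrow> h < e \<Longrightarrow> p x < p (x - h)"
    using DERIV_neg_dec_left[OF assms(1)] by force
  then have "p x < p (x - min (e/2) (d/2))"
    using \<open>0 < d\<close> by simp
  moreover have "p (x - min (e/2) (d/2)) \<le> p x"
    using assms(3) \<open>0 < d\<close> \<open>0 < e\<close> by simp
  ultimately show False by simp
qed

lemma interior_max_second_deriv_nonpos:
  fixes g gx :: "real \<Rightarrow> real"
  assumes ab: "a < x" "x < b"
    and dg: "\<And>y. a < y \<Longrightarrow> y < b \<Longrightarrow> (g has_real_derivative gx y) (at y)"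
    and dgx: "(gx has_real_derivative gxx) (at x)"
    and max: "\<And>y. a < y \<Longrightarrow> y < b \<Longrightarrow> g y \<le> g x"
  shows "gxx \<le> 0"
proof (rule ccontr)
  assume "\<not> gxx \<le> 0"
  have "gx x = 0"
    by (rule DERIV_local_max[OF dg[OF ab], of "min (x - a) (b - x)"])
      (use ab max in \<open>auto simp: abs_if\<close>)
  then obtain d where "0 < d" and gx_pos: "\<And>h. 0 < h \<Longrightarrow> h < d \<Longrightarrow> 0 < gx (x + h)"
    using DERIV_pos_inc_right[OF dgx] \<open>\<not> gxx \<le> 0\<close> by force
  define h where "h = min (d/2) ((b - x)/2)"
  have h: "0 < h" "h < d" "x + h < b"
    using \<open>0 < d\<close> ab by (auto simp: h_def min_def field_simps)
  obtain z where z: "x < z" "z < x + h" "g (x + h) - g x = h * gx z"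
    using MVT2[of x "x + h" g gx] h dg ab by force
  have "0 < h * gx z"
    using gx_pos[of "z - x"] z h by simp
  moreover have "g (x + h) \<le> g x"
    using max[of "x + h"] h ab by simp
  ultimately show False
    using z(3) by simp
qed

lemma C1_in_u_lipschitz:
  assumes "C1_in_u f"
  obtains L where "0 \<le> L" "\<And>t a b. t \<in> {T1..T2} \<Longrightarrow> a \<in> {0..M} \<Longrightarrow> b \<in> {0..M} \<Longrightarrow>
    \<bar>f t a - f t b\<bar> \<le> L * \<bar>a - b\<bar>"
proof -
  obtain fu where d: "\<And>t w. 0 \<le> w \<Longrightarrow> ((\<lambda>z. f t z) has_real_derivative fu t w) (at w within {0..})"
    and c: "continuous_on (UNIV \<times> {0..}) (\<lambda>(t, w). fu t w)"
    using assms unfolding C1_in_u_def by blast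
  have "continuous_on ({T1..T2} \<times> {0..M}) (\<lambda>(t, w). fu t w)"
    using c by (rule continuous_on_subset) auto
  then have "bounded ((\<lambda>(t, w). fu t w) ` ({T1..T2} \<times> {0..M}))"
    by (intro compact_imp_bounded compact_continuous_image compact_Times compact_Icc)
  then obtain B where B: "\<And>t w. t \<in> {T1..T2} \<Longrightarrow> w \<in> {0..M} \<Longrightarrow> \<bar>fu t w\<bar> \<le> B"
    unfolding bounded_iff by fastforce
  show ?thesis
  proof (rule that[of "max B 0"])
    fix t a b assume "t \<in> {T1..T2}" "a \<in> {0..M}" "b \<in> {0..M}"
    have "norm (f t a - f t b) \<le> max B 0 * norm (a - b)"
    proof (rule field_differentiable_bound[of "{0..M}"])
      fix z :: real assume "z \<in> {0..M}"
      then show "((\<lambda>z. f t z) has_field_derivative fu t z) (at z within {0..M})"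
        using d[of z t] by (auto intro: has_field_derivative_subset)
      show "norm (fu t z) \<le> max B 0"
        using B[OF \<open>t \<in> {T1..T2}\<close> \<open>z \<in> {0..M}\<close>] by simp
    qed (use \<open>a \<in> {0..M}\<close> \<open>b \<in> {0..M}\<close> in auto)
    then show "\<bar>f t a - f t b\<bar> \<le> max B 0 * \<bar>a - b\<bar>"
      by simp
  qed simp
qed

section \<open>Maximum principles for the heat operator\<close>

lemma parabolic_max_principle:
  fixes P Px Pxx Pt :: "real \<Rightarrow> real \<Rightarrow> real"
  assumes cont: "continuous_on ({a..b} \<times> {ta..tb}) (\<lambda>p. P (fst p) (snd p))"
    and dx: "\<And>x t. a < x \<Longrightarrow> x < b \<Longrightarrow> ta < t \<Longrightarrow> t \<le> tb \<Longrightarrow>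
      ((\<lambda>y. P y t) has_real_derivative Px x t) (at x)"
    and dxx: "\<And>x t. a < x \<Longrightarrow> x < b \<Longrightarrow> ta < t \<Longrightarrow> t \<le> tb \<Longrightarrow>
      ((\<lambda>y. Px y t) has_real_derivative Pxx x t) (at x)"
    and dt: "\<And>x t. a < x \<Longrightarrow> x < b \<Longrightarrow> ta < t \<Longrightarrow> t \<le> tb \<Longrightarrow>
      ((\<lambda>s. P x s) has_real_derivative Pt x t) (at t)"
    and sub: "\<And>x t. a < x \<Longrightarrow> x < b \<Longrightarrow> ta < t \<Longrightarrow> t \<le> tb \<Longrightarrow> 0 < P x t \<Longrightarrow>
      Pt x t - Pxx x t < 0"
    and left: "\<And>t. ta \<le> t \<Longrightarrow> t \<le> tb \<Longrightarrow> P a t \<le> 0"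
    and right: "\<And>t. ta \<le> t \<Longrightarrow> t \<le> tb \<Longrightarrow> P b t \<le> 0"
    and bottom: "\<And>x. a \<le> x \<Longrightarrow> x \<le> b \<Longrightarrow> P x ta \<le> 0"
    and x: "a \<le> x" "x \<le> b" and t: "ta \<le> t" "t \<le> tb"
  shows "P x t \<le> 0"
proof (rule ccontr)
  assume "\<not> P x t \<le> 0"
  obtain xm tm where m: "(xm, tm) \<in> {a..b} \<times> {ta..tb}"
    and max: "\<And>q. q \<in> {a..b} \<times> {ta..tb} \<Longrightarrow> P (fst q) (snd q) \<le> P xm tm"
    using continuous_attains_sup[OF compact_Times[OF compact_Icc compact_Icc] _ cont] x t
    by fastforce
  have pos: "0 < P xm tm"
    using max[of "(x, t)"] x t \<open>\<not> P x t \<le> 0\<close> by simp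
  then have xm: "a < xm" "xm < b" and tm: "ta < tm" "tm \<le> tb"
    using m left[of tm] right[of tm] bottom[of xm] by (auto simp: less_le)
  have "Pxx xm tm \<le> 0"
    by (rule interior_max_second_deriv_nonpos[of a xm b "\<lambda>y. P y tm" "\<lambda>y. Px y tm"])
      (use xm tm dx dxx max in auto)
  moreover have "0 \<le> Pt xm tm"
    by (rule DERIV_nonneg_at_left_max[OF dt[OF xm tm], of "tm - ta"])
      (use tm xm max in auto)
  ultimately show False
    using sub[OF xm tm pos] by simp
qed

lemma parabolic_comparison:
  fixes ph phx phxx pht psi psix psixx psit :: "real \<Rightarrow> real \<Rightarrow> real"
  assumes cont_ph: "continuous_on ({a..b} \<times> {ta..tb}) (\<lambda>p. ph (fst p) (snd p))"
    and cont_psi: "continuous_on ({a..b} \<times> {ta..tb}) (\<lambda>p. psi (fst p) (snd p))"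
    and interior: "\<And>x t. a < x \<Longrightarrow> x < b \<Longrightarrow> ta < t \<Longrightarrow> t \<le> tb \<Longrightarrow>
        ((\<lambda>y. ph y t) has_real_derivative phx x t) (at x)
      \<and> ((\<lambda>y. phx y t) has_real_derivative phxx x t) (at x)
      \<and> ((\<lambda>s. ph x s) has_real_derivative pht x t) (at t)
      \<and> ((\<lambda>y. psi y t) has_real_derivative psix x t) (at x)
      \<and> ((\<lambda>y. psix y t) has_real_derivative psixx x t) (at x)
      \<and> ((\<lambda>s. psi x s) has_real_derivative psit x t) (at t)
      \<and> pht x t - phxx x t \<le> psit x t - psixx x t"
    and left: "\<And>t. ta \<le> t \<Longrightarrow> t \<le> tb \<Longrightarrow> ph a t \<le> psi a t"
    and right: "\<And>t. ta \<le> t \<Longrightarrow> t \<le> tb \<Longrightarrow> ph b t \<le> psi b t"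
    and bottom: "\<And>x. a \<le> x \<Longrightarrow> x \<le> b \<Longrightarrow> ph x ta \<le> psi x ta"
    and x: "a \<le> x" "x \<le> b" and t: "ta \<le> t" "t \<le> tb"
  shows "ph x t \<le> psi x t"
proof (rule ccontr)
  assume "\<not> ph x t \<le> psi x t"
  \<comment> \<open>A small linear-in-time penalty turns the difference into a strict subsolution.\<close>
  define \<delta> where "\<delta> = (ph x t - psi x t) / (2 * (1 + (t - ta)))"
  have "0 < \<delta>"
    using \<open>\<not> ph x t \<le> psi x t\<close> t by (simp add: \<delta>_def)
  define P where "P y s = ph y s - psi y s - \<delta> * (1 + (s - ta))" for y s
  have "P x t \<le> 0"
  proof (rule parabolic_max_principle[where P = P and Px = "\<lambda>y s. phx y s - psix y s"
        and Pxx = "\<lambda>y s. phxx y s - psixx y s" and Pt = "\<lambda>y s. pht y s - psit y s - \<delta>"])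
    show "continuous_on ({a..b} \<times> {ta..tb}) (\<lambda>p. P (fst p) (snd p))"
      unfolding P_def by (intro continuous_intros cont_ph cont_psi)
  next
    fix y s assume ys: "a < y" "y < b" "ta < s" "s \<le> tb"
    note d = interior[OF ys]
    show "((\<lambda>y. P y s) has_real_derivative phx y s - psix y s) (at y)"
      unfolding P_def using d by (auto intro!: derivative_eq_intros)
    show "((\<lambda>y. phx y s - psix y s) has_real_derivative phxx y s - psixx y s) (at y)"
      using d by (auto intro!: derivative_eq_intros)
    show "((\<lambda>s. P y s) has_real_derivative pht y s - psit y s - \<delta>) (at s)"
      unfolding P_def using d by (auto intro!: derivative_eq_intros)
    show "pht y s - psit y s - \<delta> - (phxx y s - psixx y s) < 0"
      using d \<open>0 < \<delta>\<close> by simp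
  next
    fix s assume s: "ta \<le> s" "s \<le> tb"
    moreover have "0 \<le> \<delta> * (1 + (s - ta))"
      using s \<open>0 < \<delta>\<close> by simp
    ultimately show "P a s \<le> 0" "P b s \<le> 0"
      using left right by (fastforce simp: P_def)+
  next
    fix y assume "a \<le> y" "y \<le> b"
    then show "P y ta \<le> 0"
      using bottom[of y] \<open>0 < \<delta>\<close> by (simp add: P_def)
  qed (use x t in auto)
  moreover have "P x t = (ph x t - psi x t) / 2"
    using t by (simp add: P_def \<delta>_def field_simps)
  ultimately show False
    using \<open>\<not> ph x t \<le> psi x t\<close> by simp
qed

lemma parabolic_max_principle_line_approx:
  fixes W Wx Wxx Wt :: "real \<Rightarrow> real \<Rightarrow> real"
  assumes dx: "\<And>x s. ((\<lambda>y. W y s) has_real_derivative Wx x s) (at x)"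
    and dxx: "\<And>x s. ((\<lambda>y. Wx y s) has_real_derivative Wxx x s) (at x)"
    and dt: "\<And>x s. ((\<lambda>s. W x s) has_real_derivative Wt x s) (at s)"
    and cont: "continuous_on UNIV (\<lambda>p. W (fst p) (snd p))"
    and bounded: "\<And>x s. ta \<le> s \<Longrightarrow> s \<le> tb \<Longrightarrow> W x s \<le> B"
    and sub: "\<And>x s. ta < s \<Longrightarrow> s \<le> tb \<Longrightarrow> 0 < W x s \<Longrightarrow> Wt x s - Wxx x s < 0"
    and initial: "\<And>x. W x ta \<le> 0"
    and t: "ta \<le> t" "t \<le> tb" and "0 < \<epsilon>"
  shows "W x t \<le> \<epsilon> * (x * x + 2 * (t - ta) + 1)"
proof -
  \<comment> \<open>y * y + 2 s solves the heat equation: subtracting a small multiple of it confines a positive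
    maximum to a bounded rectangle.\<close>
  define R where "R = sqrt (\<bar>B\<bar> / \<epsilon>) + \<bar>x\<bar>"
  have "sqrt (\<bar>B\<bar> / \<epsilon>) * sqrt (\<bar>B\<bar> / \<epsilon>) \<le> R * R"
    using \<open>0 < \<epsilon>\<close> by (intro mult_mono) (auto simp: R_def)
  then have R: "\<bar>B\<bar> \<le> \<epsilon> * (R * R)"
    using \<open>0 < \<epsilon>\<close> by (simp add: field_simps)
  have "0 \<le> sqrt (\<bar>B\<bar> / \<epsilon>)"
    using \<open>0 < \<epsilon>\<close> by simp
  then have x_R: "- R \<le> x" "x \<le> R"
    unfolding R_def using abs_ge_self[of x] abs_ge_minus_self[of x] by linarith+
  define P where "P y s = W y s - \<epsilon> * (y * y + 2 * (s - ta) + 1)" for y s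
  have "P x t \<le> 0"
  proof (rule parabolic_max_principle[where P = P and a = "- R" and b = R
        and Px = "\<lambda>y s. Wx y s - \<epsilon> * (2 * y)" and Pxx = "\<lambda>y s. Wxx y s - \<epsilon> * 2"
        and Pt = "\<lambda>y s. Wt y s - \<epsilon> * 2"])
    show "continuous_on ({- R..R} \<times> {ta..tb}) (\<lambda>p. P (fst p) (snd p))"
      unfolding P_def by (intro continuous_intros continuous_on_subset[OF cont]) auto
  next
    fix y s
    show "((\<lambda>y. P y s) has_real_derivative Wx y s - \<epsilon> * (2 * y)) (at y)"
      unfolding P_def by (auto intro!: derivative_eq_intros dx)
    show "((\<lambda>y. Wx y s - \<epsilon> * (2 * y)) has_real_derivative Wxx y s - \<epsilon> * 2) (at y)"
      by (auto intro!: derivative_eq_intros dxx)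
    show "((\<lambda>s. P y s) has_real_derivative Wt y s - \<epsilon> * 2) (at s)"
      unfolding P_def by (auto intro!: derivative_eq_intros dt)
    assume ys: "- R < y" "y < R" "ta < s" "s \<le> tb" and "0 < P y s"
    moreover have "0 \<le> \<epsilon> * (y * y + 2 * (s - ta) + 1)"
      using ys \<open>0 < \<epsilon>\<close> by simp
    ultimately show "Wt y s - \<epsilon> * 2 - (Wxx y s - \<epsilon> * 2) < 0"
      using sub[of s y] by (simp add: P_def)
  next
    fix s assume s: "ta \<le> s" "s \<le> tb"
    have "\<epsilon> * (R * R) \<le> \<epsilon> * (R * R + 2 * (s - ta) + 1)"
      using s \<open>0 < \<epsilon>\<close> by simp
    then show "P (- R) s \<le> 0" "P R s \<le> 0"
      using bounded[OF s, of R] bounded[OF s, of "- R"] R by (simp_all add: P_def)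
  next
    fix y
    have "0 \<le> \<epsilon> * (y * y + 1)"
      using \<open>0 < \<epsilon>\<close> by (intro mult_nonneg_nonneg) auto
    then show "P y ta \<le> 0"
      using initial[of y] by (simp add: P_def)
  qed (use t x_R in auto)
  then show ?thesis
    by (simp add: P_def)
qed

lemma parabolic_max_principle_line:
  fixes W Wx Wxx Wt :: "real \<Rightarrow> real \<Rightarrow> real"
  assumes dx: "\<And>x s. ((\<lambda>y. W y s) has_real_derivative Wx x s) (at x)"
    and dxx: "\<And>x s. ((\<lambda>y. Wx y s) has_real_derivative Wxx x s) (at x)"
    and dt: "\<And>x s. ((\<lambda>s. W x s) has_real_derivative Wt x s) (at s)"
    and cont: "continuous_on UNIV (\<lambda>p. W (fst p) (snd p))"
    and bounded: "\<And>x s. ta \<le> s \<Longrightarrow> s \<le> tb \<Longrightarrow> W x s \<le> B"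
    and sub: "\<And>x s. ta < s \<Longrightarrow> s \<le> tb \<Longrightarrow> 0 < W x s \<Longrightarrow> Wt x s - Wxx x s < 0"
    and initial: "\<And>x. W x ta \<le> 0"
    and t: "ta \<le> t" "t \<le> tb"
  shows "W x t \<le> 0"
proof (rule field_le_epsilon)
  fix e :: real assume "0 < e"
  define c where "c = x * x + 2 * (t - ta) + 1"
  have "0 < c"
    using t by (simp add: c_def add_nonneg_pos)
  then have "W x t \<le> e / c * c"
    unfolding c_def using \<open>0 < e\<close>
    by (intro parabolic_max_principle_line_approx[OF dx dxx dt cont bounded sub initial t])
      (auto intro: divide_pos_pos)
  then show "W x t \<le> 0 + e"
    using \<open>0 < c\<close> by simp
qed

lemma parabolic_subsolution_nonpos:
  fixes w wx wxx wt :: "real \<Rightarrow> real \<Rightarrow> real"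
  assumes dx: "\<And>x s. ((\<lambda>y. w y s) has_real_derivative wx x s) (at x)"
    and dxx: "\<And>x s. ((\<lambda>y. wx y s) has_real_derivative wxx x s) (at x)"
    and dt: "\<And>x s. ((\<lambda>s. w x s) has_real_derivative wt x s) (at s)"
    and cont: "continuous_on UNIV (\<lambda>p. w (fst p) (snd p))"
    and bounded: "\<And>x s. w x s \<le> B"
    and linear: "\<And>x s. ta < s \<Longrightarrow> s \<le> tb \<Longrightarrow> 0 < w x s \<Longrightarrow> wt x s - wxx x s \<le> L * w x s"
    and "0 \<le> L"
    and initial: "\<And>x. w x ta \<le> 0"
    and t: "ta \<le> t" "t \<le> tb"
  shows "w x t \<le> 0"
proof -
  \<comment> \<open>The weight e turns the linear growth into decay, making e w a strict subsolution.\<close>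
  define e where "e s = exp (- (L + 1) * (s - ta))" for s
  have e_pos: "0 < e s" for s
    by (simp add: e_def)
  have de: "(e has_real_derivative - (L + 1) * e s) (at s)" for s
    unfolding e_def by (auto intro!: derivative_eq_intros)
  have "e t * w x t \<le> 0"
  proof (rule parabolic_max_principle_line[where W = "\<lambda>y s. e s * w y s"
        and Wx = "\<lambda>y s. e s * wx y s" and Wxx = "\<lambda>y s. e s * wxx y s"
        and Wt = "\<lambda>y s. - (L + 1) * e s * w y s + e s * wt y s" and B = "\<bar>B\<bar>"])
    fix y s
    show "((\<lambda>y. e s * w y s) has_real_derivative e s * wx y s) (at y)"
      "((\<lambda>y. e s * wx y s) has_real_derivative e s * wxx y s) (at y)"
      "((\<lambda>s. e s * w y s) has_real_derivative - (L + 1) * e s * w y s + e s * wt y s) (at s)"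
      by (auto intro!: derivative_eq_intros dx dxx dt de)
  next
    show "continuous_on UNIV (\<lambda>p. e (snd p) * w (fst p) (snd p))"
      unfolding e_def by (intro continuous_intros cont)
  next
    fix y s assume "ta \<le> s"
    then have "e s \<le> 1"
      using \<open>0 \<le> L\<close> by (simp add: e_def mult_nonpos_nonneg)
    show "e s * w y s \<le> \<bar>B\<bar>"
    proof (cases "0 \<le> w y s")
      case True
      then have "e s * w y s \<le> w y s"
        using \<open>e s \<le> 1\<close> e_pos[of s] by (simp add: mult_left_le_one_le)
      then show ?thesis
        using bounded[of y s] by linarith
    next
      case False
      then have "e s * w y s < 0"
        using mult_pos_neg[OF e_pos[of s]] by simp
      then show ?thesis
        by linarith
    qed
  next
    fix y s assume s: "ta < s" "s \<le> tb" and pos: "0 < e s * w y s"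
    then have "0 < w y s"
      using e_pos[of s] by (simp add: zero_less_mult_iff)
    then have "e s * (wt y s - wxx y s) \<le> e s * (L * w y s)"
      using linear[OF s] e_pos[of s] by (intro mult_left_mono) auto
    with pos show "- (L + 1) * e s * w y s + e s * wt y s - e s * wxx y s < 0"
      by (simp add: algebra_simps)
  qed (use initial t in \<open>simp_all add: e_def\<close>)
  then show ?thesis
    using e_pos[of t] by (simp add: mult_le_0_iff)
qed

lemma parabolic_uniqueness_bounded:
  fixes w wx wxx wt :: "real \<Rightarrow> real \<Rightarrow> real"
  assumes dx: "\<And>x s. ((\<lambda>y. w y s) has_real_derivative wx x s) (at x)"
    and dxx: "\<And>x s. ((\<lambda>y. wx y s) has_real_derivative wxx x s) (at x)"
    and dt: "\<And>x s. ((\<lambda>s. w x s) has_real_derivative wt x s) (at s)"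
    and cont: "continuous_on UNIV (\<lambda>p. w (fst p) (snd p))"
    and bounded: "\<And>x s. \<bar>w x s\<bar> \<le> B"
    and linear: "\<And>x s. ta \<le> s \<Longrightarrow> s \<le> tb \<Longrightarrow> \<bar>wt x s - wxx x s\<bar> \<le> L * \<bar>w x s\<bar>"
    and "0 \<le> L"
    and initial: "\<And>x. w x ta = 0"
    and t: "ta \<le> t" "t \<le> tb"
  shows "w x t = 0"
proof -
  have "w x t \<le> 0"
  proof (rule parabolic_subsolution_nonpos[where w = w, OF dx dxx dt cont])
    show "w y s \<le> B" for y s
      using bounded[of y s] by simp
    show "wt y s - wxx y s \<le> L * w y s" if "ta < s" "s \<le> tb" "0 < w y s" for y s
      using linear[of s y] that by simp
  qed (use initial t \<open>0 \<le> L\<close> in auto)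
  moreover have "- w x t \<le> 0"
  proof (rule parabolic_subsolution_nonpos[where w = "\<lambda>y s. - w y s" and wx = "\<lambda>y s. - wx y s"
        and wxx = "\<lambda>y s. - wxx y s" and wt = "\<lambda>y s. - wt y s"])
    show "((\<lambda>y. - w y s) has_real_derivative - wx y s) (at y)"
      "((\<lambda>y. - wx y s) has_real_derivative - wxx y s) (at y)"
      "((\<lambda>s. - w y s) has_real_derivative - wt y s) (at s)" for y s
      by (intro DERIV_minus dx dxx dt)+
    show "continuous_on UNIV (\<lambda>p. - w (fst p) (snd p))"
      using continuous_on_minus[OF cont] .
    show "- w y s \<le> B" for y s
      using bounded[of y s] by simp
    show "- wt y s - - wxx y s \<le> L * - w y s" if "ta < s" "s \<le> tb" "0 < - w y s" for y s
      using linear[of s y] that by simp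
  qed (use initial t \<open>0 \<le> L\<close> in auto)
  ultimately show ?thesis
    by simp
qed

text \<open>The exponential barrier of the Hopf lemma on [0, d], vanishing at d; the linear correction
  makes it nonpositive on [r, d] at time 0.\<close>
definition hopf_barrier :: "real \<Rightarrow> real \<Rightarrow> real \<Rightarrow> real \<Rightarrow> real \<Rightarrow> real" where
  "hopf_barrier k r d y s =
     exp (k * k * s) * (exp (- k * y) - exp (- k * d)) - k * exp (- k * r) * (d - y)"

lemma hopf_barrier_subcaloric:
  fixes k s y d :: real
  shows "k * k * exp (k * k * s) * (exp (- k * y) - exp (- k * d))
     - exp (k * k * s) * (k * k * exp (- k * y)) \<le> 0"
proof -
  have "k * k * exp (k * k * s) * (exp (- k * y) - exp (- k * d))
      - exp (k * k * s) * (k * k * exp (- k * y)) = - (k * k * exp (k * k * s) * exp (- k * d))"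
    by algebra
  then show ?thesis
    by simp
qed

lemma hopf_barrier_right: "hopf_barrier k r d d s = 0"
  by (simp add: hopf_barrier_def)

lemma hopf_barrier_left_le:
  assumes "0 \<le> k" "0 \<le> d"
  shows "hopf_barrier k r d 0 s \<le> exp (k * k * s)"
proof -
  have "exp (k * k * s) * (1 - exp (- k * d)) \<le> exp (k * k * s)"
    by (intro mult_left_le) auto
  moreover have "0 \<le> k * exp (- k * r) * d"
    using assms by simp
  moreover have "hopf_barrier k r d 0 s = exp (k * k * s) * (1 - exp (- k * d)) - k * exp (- k * r) * d"
    by (simp add: hopf_barrier_def)
  ultimately show ?thesis
    by linarith
qed

lemma hopf_barrier_initial_le:
  assumes "0 \<le> k" "0 \<le> y" "y \<le> d"
  shows "hopf_barrier k r d y 0 \<le> 1"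
proof -
  have "exp (- k * y) \<le> 1" "0 < exp (- k * d)"
    using assms by simp_all
  moreover have "0 \<le> k * exp (- k * r) * (d - y)"
    using assms by simp
  moreover have "hopf_barrier k r d y 0 = exp (- k * y) - exp (- k * d) - k * exp (- k * r) * (d - y)"
    by (simp add: hopf_barrier_def)
  ultimately show ?thesis
    by linarith
qed

lemma hopf_barrier_initial_nonpos:
  assumes "0 < k" "r \<le> y" "y \<le> d"
  shows "hopf_barrier k r d y 0 \<le> 0"
proof -
  have "exp (- k * y) - exp (- k * d) = exp (- k * y) * (1 - exp (- (k * (d - y))))"
    by (simp add: algebra_simps flip: exp_add)
  also have "\<dots> \<le> exp (- k * y) * (k * (d - y))"
    using exp_ge_add_one_self[of "- (k * (d - y))"] by (intro mult_left_mono) auto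
  also have "\<dots> \<le> exp (- k * r) * (k * (d - y))"
    using assms by (intro mult_right_mono) auto
  finally show ?thesis
    by (simp add: hopf_barrier_def algebra_simps)
qed

lemma hopf_barrier_slope_neg:
  fixes k r d s :: real
  assumes "0 < k" "0 < r" "d \<le> k * s"
  shows "exp (k * k * s) * (- k * exp (- k * d)) + k * exp (- k * r) < 0"
proof -
  have "0 \<le> k * (k * s - d)"
    using assms by (auto intro!: mult_nonneg_nonneg)
  moreover have "0 < k * r"
    using assms by simp
  ultimately have "exp (- k * r) < exp (k * k * s + - k * d)"
    by (simp add: algebra_simps)
  then have "exp (- k * r) < exp (k * k * s) * exp (- k * d)"
    by (simp only: exp_add)
  then have "k * exp (- k * r) < k * (exp (k * k * s) * exp (- k * d))"
    using \<open>0 < k\<close> by simp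
  then show ?thesis
    by (simp add: algebra_simps)
qed

section \<open>Entire solutions and their reflections\<close>

locale bounded_entire_solution =
  fixes f :: "real \<Rightarrow> real \<Rightarrow> real" and v vx vxx vt :: "real \<Rightarrow> real \<Rightarrow> real" and M :: real
  assumes dx: "\<And>x t. ((\<lambda>y. v y t) has_real_derivative vx x t) (at x)"
    and dxx: "\<And>x t. ((\<lambda>y. vx y t) has_real_derivative vxx x t) (at x)"
    and dt: "\<And>x t. ((\<lambda>s. v x s) has_real_derivative vt x t) (at t)"
    and equation: "\<And>x t. vt x t = vxx x t + f t (v x t)"
    and nonneg: "\<And>x t. 0 \<le> v x t"
    and bounded: "\<And>x t. v x t \<le> M"
    and cont: "continuous_on UNIV (\<lambda>p. v (fst p) (snd p))"
    and C1: "C1_in_u f"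
begin

lemma lipschitz_along_solution:
  obtains L where "0 \<le> L"
    "\<And>s y z. T1 \<le> s \<Longrightarrow> s \<le> T2 \<Longrightarrow> \<bar>f s (v y s) - f s (v z s)\<bar> \<le> L * \<bar>v y s - v z s\<bar>"
proof -
  obtain L where "0 \<le> L" and L: "\<And>t a b. t \<in> {T1..T2} \<Longrightarrow> a \<in> {0..M} \<Longrightarrow> b \<in> {0..M} \<Longrightarrow>
      \<bar>f t a - f t b\<bar> \<le> L * \<bar>a - b\<bar>"
    using C1_in_u_lipschitz[OF C1] by blast
  show ?thesis
    by (rule that[OF \<open>0 \<le> L\<close>], rule L) (simp_all add: nonneg bounded)
qed

lemma continuous_on_compose_v:
  assumes "continuous_on S g" "continuous_on S k"
  shows "continuous_on S (\<lambda>p. v (g p) (k p))"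
  using continuous_on_compose2[OF cont continuous_on_Pair[OF assms]] by simp

lemma spatially_constant_forward:
  assumes const: "\<And>x. v x t1 = v 0 t1" and "t1 \<le> t"
  shows "v x t = v 0 t"
proof -
  obtain L where "0 \<le> L" and L: "\<And>s y z. t1 \<le> s \<Longrightarrow> s \<le> t \<Longrightarrow>
      \<bar>f s (v y s) - f s (v z s)\<bar> \<le> L * \<bar>v y s - v z s\<bar>"
    using lipschitz_along_solution by blast
  have initial: "v (y + x) t1 - v y t1 = 0" for y
    using const[of "y + x"] const[of y] by simp
  \<comment> \<open>The translate of v by x solves the same equation and has the same data at t1.\<close>
  have "v (0 + x) t - v 0 t = 0"
  proof (rule parabolic_uniqueness_bounded[where w = "\<lambda>y s. v (y + x) s - v y s"
        and wx = "\<lambda>y s. vx (y + x) s - vx y s" and wxx = "\<lambda>y s. vxx (y + x) s - vxx y s"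
        and wt = "\<lambda>y s. vt (y + x) s - vt y s" and B = M and L = L and ta = t1 and tb = t])
    fix y s
    show "((\<lambda>y. v (y + x) s - v y s) has_real_derivative vx (y + x) s - vx y s) (at y)"
      "((\<lambda>y. vx (y + x) s - vx y s) has_real_derivative vxx (y + x) s - vxx y s) (at y)"
      "((\<lambda>s. v (y + x) s - v y s) has_real_derivative vt (y + x) s - vt y s) (at s)"
      by (intro DERIV_diff DERIV_shift[THEN iffD1] dx dxx dt)+
    show "\<bar>v (y + x) s - v y s\<bar> \<le> M"
      using nonneg[of "y + x" s] nonneg[of y s] bounded[of "y + x" s] bounded[of y s] by linarith
  next
    fix y s assume "t1 \<le> s" "s \<le> t"
    then show "\<bar>vt (y + x) s - vt y s - (vxx (y + x) s - vxx y s)\<bar> \<le> L * \<bar>v (y + x) s - v y s\<bar>"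
      using L[of s "y + x" y] by (simp add: equation)
  next
    show "continuous_on UNIV (\<lambda>p. v (fst p + x) (snd p) - v (fst p) (snd p))"
      by (intro continuous_intros continuous_on_compose_v)
  qed (use initial \<open>0 \<le> L\<close> \<open>t1 \<le> t\<close> in auto)
  then show ?thesis
    by simp
qed

end

locale symmetric_solution = bounded_entire_solution +
  fixes x0 :: real
  assumes symmetric: "\<And>x t. v (2 * x0 - x) t = v x t"
    and nonincreasing: "\<And>x t. x0 < x \<Longrightarrow> vx x t \<le> 0"
begin

lemma antitone_right:
  assumes "x0 \<le> a" "a \<le> b"
  shows "v b t \<le> v a t"
proof -
  have "continuous_on {a..b} (\<lambda>y. v y t)"
    using DERIV_isCont[OF dx] by (simp add: continuous_at_imp_continuous_on)
  then show ?thesis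
    using DERIV_nonpos_imp_decreasing_open[of a b "\<lambda>y. v y t"] assms dx nonincreasing by force
qed

lemma reflection_le:
  assumes "x0 \<le> x1" "x \<le> x1"
  shows "v (2 * x1 - x) t \<le> v x t"
proof (cases "x0 \<le> x")
  case True
  then show ?thesis
    using antitone_right[of x "2 * x1 - x" t] assms by simp
next
  case False
  then have "v (2 * x1 - x) t \<le> v (2 * x0 - x) t"
    using antitone_right[of "2 * x0 - x" "2 * x1 - x" t] assms by simp
  then show ?thesis
    using symmetric[of x t] by simp
qed

lemma dx_reflect: "((\<lambda>y. v (2 * c - y) t) has_real_derivative - vx (2 * c - y) t) (at y)"
  by (rule DERIV_reflect[OF dx])

lemma dxx_reflect: "((\<lambda>y. vx (2 * c - y) t) has_real_derivative - vxx (2 * c - y) t) (at y)"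
  by (rule DERIV_reflect[OF dxx])

lemma isCont_reflection_diff: "isCont (\<lambda>y. v y t - v (2 * c - y) t) x"
  using DERIV_isCont[OF DERIV_diff[OF dx dx_reflect]] .

text \<open>The weight makes the gap a supersolution of the heat equation on x \<le> x1 when L is a
  Lipschitz constant of f along v.\<close>
definition reflection_gap :: "real \<Rightarrow> real \<Rightarrow> real \<Rightarrow> real \<Rightarrow> real \<Rightarrow> real" where
  "reflection_gap L ta x1 x s = exp (L * (s - ta)) * (v x s - v (2 * x1 - x) s)"

lemma reflection_gap_nonneg:
  "x0 \<le> x1 \<Longrightarrow> y \<le> x1 \<Longrightarrow> 0 \<le> reflection_gap L ta x1 y s"
  unfolding reflection_gap_def using reflection_le[of x1 y s] by simp

lemma reflection_gap_ge:
  assumes "0 \<le> L" "ta \<le> s" "x0 \<le> x1" "y \<le> x1"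
  shows "v y s - v (2 * x1 - y) s \<le> reflection_gap L ta x1 y s"
proof -
  have "0 \<le> v y s - v (2 * x1 - y) s"
    using reflection_le[of x1 y s] assms by simp
  moreover have "1 \<le> exp (L * (s - ta))"
    using assms by simp
  ultimately show ?thesis
    unfolding reflection_gap_def using mult_right_mono by fastforce
qed

lemma reflection_gap_comparison:
  fixes ph phx phxx pht :: "real \<Rightarrow> real \<Rightarrow> real"
  assumes "x0 \<le> x1" "b \<le> x1"
    and lip: "\<And>s y z. ta \<le> s \<Longrightarrow> s \<le> tb \<Longrightarrow>
      \<bar>f s (v y s) - f s (v z s)\<bar> \<le> L * \<bar>v y s - v z s\<bar>"
    and pdx: "\<And>x s. ((\<lambda>y. ph y s) has_real_derivative phx x s) (at x)"
    and pdxx: "\<And>x s. ((\<lambda>y. phx y s) has_real_derivative phxx x s) (at x)"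
    and pdt: "\<And>x s. ((\<lambda>s. ph x s) has_real_derivative pht x s) (at s)"
    and pcont: "continuous_on UNIV (\<lambda>p. ph (fst p) (snd p))"
    and subcaloric: "\<And>x s. a < x \<Longrightarrow> x < b \<Longrightarrow> ta < s \<Longrightarrow> s \<le> tb \<Longrightarrow> pht x s - phxx x s \<le> 0"
    and left: "\<And>s. ta \<le> s \<Longrightarrow> s \<le> tb \<Longrightarrow> ph a s \<le> reflection_gap L ta x1 a s"
    and right: "\<And>s. ta \<le> s \<Longrightarrow> s \<le> tb \<Longrightarrow> ph b s \<le> reflection_gap L ta x1 b s"
    and bottom: "\<And>x. a \<le> x \<Longrightarrow> x \<le> b \<Longrightarrow> ph x ta \<le> reflection_gap L ta x1 x ta"
    and "a \<le> x" "x \<le> b" "ta \<le> s" "s \<le> tb"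
  shows "ph x s \<le> reflection_gap L ta x1 x s"
proof (rule parabolic_comparison[where psi = "reflection_gap L ta x1"
      and psix = "\<lambda>y r. exp (L * (r - ta)) * (vx y r + vx (2 * x1 - y) r)"
      and psixx = "\<lambda>y r. exp (L * (r - ta)) * (vxx y r - vxx (2 * x1 - y) r)"
      and psit = "\<lambda>y r. L * exp (L * (r - ta)) * (v y r - v (2 * x1 - y) r)
        + exp (L * (r - ta)) * (vt y r - vt (2 * x1 - y) r)"])
  show "continuous_on ({a..b} \<times> {ta..tb}) (\<lambda>p. ph (fst p) (snd p))"
    using pcont by (rule continuous_on_subset) simp
  show "continuous_on ({a..b} \<times> {ta..tb}) (\<lambda>p. reflection_gap L ta x1 (fst p) (snd p))"
    unfolding reflection_gap_def by (intro continuous_intros continuous_on_compose_v)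
next
  fix y r assume yr: "a < y" "y < b" "ta < r" "r \<le> tb"
  let ?z = "v y r - v (2 * x1 - y) r"
  have "0 \<le> ?z"
    using reflection_le[of x1 y r] yr assms(1,2) by simp
  then have "- L * ?z \<le> f r (v y r) - f r (v (2 * x1 - y) r)"
    using lip[of r y "2 * x1 - y"] yr by (simp add: abs_le_iff)
  then have "0 \<le> exp (L * (r - ta)) * (L * ?z + (f r (v y r) - f r (v (2 * x1 - y) r)))"
    by simp
  also have "\<dots> = L * exp (L * (r - ta)) * ?z + exp (L * (r - ta)) * (vt y r - vt (2 * x1 - y) r)
      - exp (L * (r - ta)) * (vxx y r - vxx (2 * x1 - y) r)"
    using equation[of y r] equation[of "2 * x1 - y" r] by (simp add: algebra_simps)
  finally show "((\<lambda>y. ph y r) has_real_derivative phx y r) (at y) \<and>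
      ((\<lambda>y. phx y r) has_real_derivative phxx y r) (at y) \<and>
      ((\<lambda>r. ph y r) has_real_derivative pht y r) (at r) \<and>
      ((\<lambda>y. reflection_gap L ta x1 y r) has_real_derivative
        exp (L * (r - ta)) * (vx y r + vx (2 * x1 - y) r)) (at y) \<and>
      ((\<lambda>y. exp (L * (r - ta)) * (vx y r + vx (2 * x1 - y) r)) has_real_derivative
        exp (L * (r - ta)) * (vxx y r - vxx (2 * x1 - y) r)) (at y) \<and>
      ((\<lambda>r. reflection_gap L ta x1 y r) has_real_derivative
        L * exp (L * (r - ta)) * ?z + exp (L * (r - ta)) * (vt y r - vt (2 * x1 - y) r)) (at r) \<and>
      pht y r - phxx y r \<le> L * exp (L * (r - ta)) * ?z
        + exp (L * (r - ta)) * (vt y r - vt (2 * x1 - y) r)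
        - exp (L * (r - ta)) * (vxx y r - vxx (2 * x1 - y) r)"
    using subcaloric[OF yr] pdx pdxx pdt unfolding reflection_gap_def
    by (auto intro!: derivative_eq_intros dx dxx dt dx_reflect dxx_reflect)
qed (use assms in auto)

lemma reflection_gap_above_cosine_barrier:
  assumes "x0 < x1" "0 < r" "r \<le> x1 - x0" "t \<le> t'"
    and lip: "\<And>s y z. t \<le> s \<Longrightarrow> s \<le> t' \<Longrightarrow>
      \<bar>f s (v y s) - f s (v z s)\<bar> \<le> L * \<bar>v y s - v z s\<bar>"
    and near: "\<And>y. \<bar>y - x0\<bar> \<le> r \<Longrightarrow> m \<le> v y t - v (2 * x1 - y) t" and "0 \<le> m"
  shows "m * exp (- ((pi / (2 * r)) ^ 2 * (t' - t))) \<le> reflection_gap L t x1 x0 t'"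
proof -
  \<comment> \<open>The first Dirichlet mode of [x0 - r, x0 + r] with height m.\<close>
  define c where "c = pi / (2 * r)"
  define ph where "ph y s = m * exp (- (c * c) * (s - t)) * cos (c * (y - x0))" for y s
  have "ph x0 t' \<le> reflection_gap L t x1 x0 t'"
  proof (rule reflection_gap_comparison[where ph = ph and a = "x0 - r" and b = "x0 + r"
        and phx = "\<lambda>y s. m * exp (- (c * c) * (s - t)) * (- sin (c * (y - x0)) * c)"
        and phxx = "\<lambda>y s. m * exp (- (c * c) * (s - t)) * (- cos (c * (y - x0)) * c * c)"
        and pht = "\<lambda>y s. m * (- (c * c) * exp (- (c * c) * (s - t))) * cos (c * (y - x0))"])
    fix y s
    show "((\<lambda>y. ph y s) has_real_derivative
        m * exp (- (c * c) * (s - t)) * (- sin (c * (y - x0)) * c)) (at y)"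
      "((\<lambda>y. m * exp (- (c * c) * (s - t)) * (- sin (c * (y - x0)) * c)) has_real_derivative
        m * exp (- (c * c) * (s - t)) * (- cos (c * (y - x0)) * c * c)) (at y)"
      "((\<lambda>s. ph y s) has_real_derivative
        m * (- (c * c) * exp (- (c * c) * (s - t))) * cos (c * (y - x0))) (at s)"
      unfolding ph_def by (auto intro!: derivative_eq_intros)
    show "m * (- (c * c) * exp (- (c * c) * (s - t))) * cos (c * (y - x0))
        - m * exp (- (c * c) * (s - t)) * (- cos (c * (y - x0)) * c * c) \<le> 0"
      by (simp add: algebra_simps)
  next
    show "continuous_on UNIV (\<lambda>p. ph (fst p) (snd p))"
      unfolding ph_def by (intro continuous_intros)
  next
    have "c * (x0 - r - x0) = - (pi / 2)" "c * (x0 + r - x0) = pi / 2"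
      using \<open>0 < r\<close> by (simp_all add: c_def field_simps)
    then have "ph (x0 - r) s = 0" "ph (x0 + r) s = 0" for s
      unfolding ph_def by (simp_all only: cos_minus cos_pi_half mult_zero_right)
    then show "ph (x0 - r) s \<le> reflection_gap L t x1 (x0 - r) s"
      "ph (x0 + r) s \<le> reflection_gap L t x1 (x0 + r) s" for s
      using reflection_gap_nonneg[of x1] assms(1-3) by auto
  next
    fix y assume "x0 - r \<le> y" "y \<le> x0 + r"
    then have "m \<le> v y t - v (2 * x1 - y) t"
      using near by (simp add: abs_le_iff)
    moreover have "ph y t \<le> m"
      using \<open>0 \<le> m\<close> by (simp add: ph_def mult_left_le)
    ultimately show "ph y t \<le> reflection_gap L t x1 y t"
      by (simp add: reflection_gap_def)
  qed (use assms in auto)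
  then show ?thesis
    by (simp add: ph_def c_def power2_eq_square)
qed

text \<open>Strong maximum principle for the reflection gap.\<close>
lemma reflection_coincidence_backward:
  assumes "x0 < x1" and coincide: "v x0 t' = v (2 * x1 - x0) t'" and "t \<le> t'"
  shows "v x0 t = v (2 * x1 - x0) t"
proof (rule ccontr)
  assume "v x0 t \<noteq> v (2 * x1 - x0) t"
  then have "0 < v x0 t - v (2 * x1 - x0) t"
    using reflection_le[of x1 x0 t] \<open>x0 < x1\<close> by simp
  then obtain r0 where "0 < r0" and near: "\<And>y. \<bar>y - x0\<bar> < r0 \<Longrightarrow> 0 < v y t - v (2 * x1 - y) t"
    using isCont_gt_on_ball[OF isCont_reflection_diff[where t = t and c = x1 and x = x0]] by blast
  define r where "r = min (r0 / 2) (x1 - x0)"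
  have r: "0 < r" "r \<le> x1 - x0" "r < r0"
    using \<open>0 < r0\<close> \<open>x0 < x1\<close> by (auto simp: r_def)
  have "continuous_on {x0 - r..x0 + r} (\<lambda>y. v y t - v (2 * x1 - y) t)"
    using isCont_reflection_diff by (simp add: continuous_at_imp_continuous_on)
  then obtain m where "0 < m" and lower: "\<And>y. y \<in> {x0 - r..x0 + r} \<Longrightarrow> m \<le> v y t - v (2 * x1 - y) t"
    by (rule continuous_on_Icc_positive_lower_bound) (use near r in \<open>auto simp: abs_le_iff\<close>)
  obtain L where lip: "\<And>s y z. t \<le> s \<Longrightarrow> s \<le> t' \<Longrightarrow>
      \<bar>f s (v y s) - f s (v z s)\<bar> \<le> L * \<bar>v y s - v z s\<bar>"
    using lipschitz_along_solution by blast
  have "m * exp (- ((pi / (2 * r)) ^ 2 * (t' - t))) \<le> reflection_gap L t x1 x0 t'"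
    by (rule reflection_gap_above_cosine_barrier) (use assms r lip lower \<open>0 < m\<close> in \<open>auto simp: abs_le_iff\<close>)
  moreover have "reflection_gap L t x1 x0 t' = 0"
    using coincide by (simp add: reflection_gap_def)
  moreover have "0 < m * exp (- ((pi / (2 * r)) ^ 2 * (t' - t)))"
    using \<open>0 < m\<close> by simp
  ultimately show False
    by linarith
qed

lemma reflection_gap_above_hopf_barrier:
  assumes "x0 < x1" "ta \<le> tb" "0 \<le> L"
    and lip: "\<And>s y z. ta \<le> s \<Longrightarrow> s \<le> tb \<Longrightarrow>
      \<bar>f s (v y s) - f s (v z s)\<bar> \<le> L * \<bar>v y s - v z s\<bar>"
    and "0 < k" "0 \<le> \<epsilon>"
    and side: "\<And>s. ta \<le> s \<Longrightarrow> s \<le> tb \<Longrightarrow>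
      \<epsilon> * exp (k * k * (s - ta)) \<le> v x0 s - v (2 * x1 - x0) s"
    and near: "\<And>y. x0 \<le> y \<Longrightarrow> y < x0 + r \<Longrightarrow> \<epsilon> \<le> v y ta - v (2 * x1 - y) ta"
    and "x0 \<le> y" "y \<le> x1"
  shows "\<epsilon> * hopf_barrier k r (x1 - x0) (y - x0) (tb - ta) \<le> reflection_gap L ta x1 y tb"
proof (rule reflection_gap_comparison[where a = x0 and b = x1
      and ph = "\<lambda>y s. \<epsilon> * hopf_barrier k r (x1 - x0) (y - x0) (s - ta)"
      and phx = "\<lambda>y s. \<epsilon> * (exp (k * k * (s - ta)) * (- k * exp (- k * (y - x0)))
        + k * exp (- k * r))"
      and phxx = "\<lambda>y s. \<epsilon> * (exp (k * k * (s - ta)) * (k * k * exp (- k * (y - x0))))"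
      and pht = "\<lambda>y s. \<epsilon> * (k * k * exp (k * k * (s - ta))
        * (exp (- k * (y - x0)) - exp (- k * (x1 - x0))))"])
  fix y s
  show "((\<lambda>y. \<epsilon> * hopf_barrier k r (x1 - x0) (y - x0) (s - ta)) has_real_derivative
      \<epsilon> * (exp (k * k * (s - ta)) * (- k * exp (- k * (y - x0))) + k * exp (- k * r))) (at y)"
    "((\<lambda>y. \<epsilon> * (exp (k * k * (s - ta)) * (- k * exp (- k * (y - x0))) + k * exp (- k * r)))
      has_real_derivative \<epsilon> * (exp (k * k * (s - ta)) * (k * k * exp (- k * (y - x0))))) (at y)"
    "((\<lambda>s. \<epsilon> * hopf_barrier k r (x1 - x0) (y - x0) (s - ta)) has_real_derivative
      \<epsilon> * (k * k * exp (k * k * (s - ta)) * (exp (- k * (y - x0)) - exp (- k * (x1 - x0))))) (at s)"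
    unfolding hopf_barrier_def by (auto intro!: derivative_eq_intros)
  show "\<epsilon> * (k * k * exp (k * k * (s - ta)) * (exp (- k * (y - x0)) - exp (- k * (x1 - x0))))
      - \<epsilon> * (exp (k * k * (s - ta)) * (k * k * exp (- k * (y - x0)))) \<le> 0"
    using mult_left_mono[OF hopf_barrier_subcaloric[of k "s - ta" "y - x0" "x1 - x0"] \<open>0 \<le> \<epsilon>\<close>]
    by (simp only: right_diff_distrib mult_zero_right)
next
  show "continuous_on UNIV (\<lambda>p. \<epsilon> * hopf_barrier k r (x1 - x0) (fst p - x0) (snd p - ta))"
    unfolding hopf_barrier_def by (intro continuous_intros)
next
  fix s assume s: "ta \<le> s" "s \<le> tb"
  have "\<epsilon> * hopf_barrier k r (x1 - x0) (x0 - x0) (s - ta) \<le> \<epsilon> * exp (k * k * (s - ta))"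
    using hopf_barrier_left_le[of k "x1 - x0"] assms by (intro mult_left_mono) auto
  also have "\<dots> \<le> v x0 s - v (2 * x1 - x0) s"
    by (rule side[OF s])
  also have "\<dots> \<le> reflection_gap L ta x1 x0 s"
    by (rule reflection_gap_ge) (use assms s in auto)
  finally show "\<epsilon> * hopf_barrier k r (x1 - x0) (x0 - x0) (s - ta) \<le> reflection_gap L ta x1 x0 s" .
  show "\<epsilon> * hopf_barrier k r (x1 - x0) (x1 - x0) (s - ta) \<le> reflection_gap L ta x1 x1 s"
    using reflection_gap_nonneg[of x1 x1] \<open>x0 < x1\<close> by (simp add: hopf_barrier_right)
next
  fix y assume y: "x0 \<le> y" "y \<le> x1"
  show "\<epsilon> * hopf_barrier k r (x1 - x0) (y - x0) (ta - ta) \<le> reflection_gap L ta x1 y ta"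
  proof (cases "y < x0 + r")
    case True
    have "\<epsilon> * hopf_barrier k r (x1 - x0) (y - x0) 0 \<le> \<epsilon>"
      using hopf_barrier_initial_le[of k "y - x0" "x1 - x0" r] assms y
      by (intro mult_left_le) auto
    then show ?thesis
      using near[OF y(1) True] by (simp add: reflection_gap_def)
  next
    case False
    then have "\<epsilon> * hopf_barrier k r (x1 - x0) (y - x0) 0 \<le> 0"
      using hopf_barrier_initial_nonpos[of k r "y - x0" "x1 - x0"] assms y
      by (simp add: mult_nonneg_nonpos)
    then show ?thesis
      using reflection_gap_nonneg[of x1 y L ta ta] \<open>x0 < x1\<close> y by simp
  qed
qed (use assms lip in auto)

lemma reflection_slope_le_hopf_barrier_slope:
  assumes "x0 < x1" "ta \<le> tb" "0 \<le> L"
    and lip: "\<And>s y z. ta \<le> s \<Longrightarrow> s \<le> tb \<Longrightarrow>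
      \<bar>f s (v y s) - f s (v z s)\<bar> \<le> L * \<bar>v y s - v z s\<bar>"
    and "0 < k" "0 \<le> \<epsilon>"
    and side: "\<And>s. ta \<le> s \<Longrightarrow> s \<le> tb \<Longrightarrow>
      \<epsilon> * exp (k * k * (s - ta)) \<le> v x0 s - v (2 * x1 - x0) s"
    and near: "\<And>y. x0 \<le> y \<Longrightarrow> y < x0 + r \<Longrightarrow> \<epsilon> \<le> v y ta - v (2 * x1 - y) ta"
  shows "2 * exp (L * (tb - ta)) * vx x1 tb
    \<le> \<epsilon> * (exp (k * k * (tb - ta)) * (- k * exp (- k * (x1 - x0))) + k * exp (- k * r))"
proof -
  \<comment> \<open>q is nonpositive on [x0, x1] and vanishes at x1.\<close>
  define q where "q y = \<epsilon> * hopf_barrier k r (x1 - x0) (y - x0) (tb - ta) - reflection_gap L ta x1 y tb"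
    for y
  have "(q has_real_derivative
      \<epsilon> * (exp (k * k * (tb - ta)) * (- k * exp (- k * (x1 - x0))) + k * exp (- k * r))
      - exp (L * (tb - ta)) * (vx x1 tb + vx x1 tb)) (at x1)"
    unfolding q_def hopf_barrier_def reflection_gap_def
    by (auto intro!: derivative_eq_intros dx dx_reflect)
  then have "0 \<le> \<epsilon> * (exp (k * k * (tb - ta)) * (- k * exp (- k * (x1 - x0))) + k * exp (- k * r))
      - exp (L * (tb - ta)) * (vx x1 tb + vx x1 tb)"
  proof (rule DERIV_nonneg_at_left_max[where d = "x1 - x0"])
    fix y assume "x1 - (x1 - x0) < y" "y < x1"
    then show "q y \<le> q x1"
      using reflection_gap_above_hopf_barrier[where r = r and y = y, OF assms]
      by (simp add: q_def hopf_barrier_right reflection_gap_def)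
  qed (use assms in simp)
  then show ?thesis
    by simp
qed

lemma hopf_reflection:
  assumes "x0 < x1" "ta < tb"
    and pos: "\<And>s. ta \<le> s \<Longrightarrow> s \<le> tb \<Longrightarrow> v (2 * x1 - x0) s < v x0 s"
  shows "vx x1 tb < 0"
proof -
  define S where "S = tb - ta"
  have "continuous_on {ta..tb} (\<lambda>s. v x0 s - v (2 * x1 - x0) s)"
    using DERIV_isCont[OF dt] by (intro continuous_on_diff continuous_at_imp_continuous_on) auto
  then obtain m where "0 < m" and lower: "\<And>s. s \<in> {ta..tb} \<Longrightarrow> m \<le> v x0 s - v (2 * x1 - x0) s"
    by (rule continuous_on_Icc_positive_lower_bound) (use pos in auto)
  have "m / 2 < v x0 ta - v (2 * x1 - x0) ta"
    using lower[of ta] \<open>0 < m\<close> \<open>ta < tb\<close> by simp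
  then obtain r where "0 < r" and near: "\<And>y. \<bar>y - x0\<bar> < r \<Longrightarrow> m / 2 < v y ta - v (2 * x1 - y) ta"
    using isCont_gt_on_ball[OF isCont_reflection_diff[where t = ta and c = x1 and x = x0]] by blast
  obtain L where "0 \<le> L" and lip: "\<And>s y z. ta \<le> s \<Longrightarrow> s \<le> tb \<Longrightarrow>
      \<bar>f s (v y s) - f s (v z s)\<bar> \<le> L * \<bar>v y s - v z s\<bar>"
    using lipschitz_along_solution by blast
  define k where "k = (x1 - x0) / S"
  define \<epsilon> where "\<epsilon> = m / 2 * exp (- (k * k * S))"
  have "0 < k" "0 < \<epsilon>"
    using assms \<open>0 < m\<close> by (simp_all add: k_def S_def \<epsilon>_def)
  have "2 * exp (L * S) * vx x1 tb
      \<le> \<epsilon> * (exp (k * k * S) * (- k * exp (- k * (x1 - x0))) + k * exp (- k * r))"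
    unfolding S_def
  proof (rule reflection_slope_le_hopf_barrier_slope)
    fix s assume "ta \<le> s" "s \<le> tb"
    then have "k * k * (s - ta) \<le> k * k * S"
      by (intro mult_left_mono) (auto simp: S_def)
    then have "\<epsilon> * exp (k * k * (s - ta)) \<le> \<epsilon> * exp (k * k * S)"
      using \<open>0 < \<epsilon>\<close> by simp
    also have "\<dots> = m / 2"
      by (simp add: \<epsilon>_def flip: exp_add)
    also have "\<dots> \<le> v x0 s - v (2 * x1 - x0) s"
      using lower[of s] \<open>ta \<le> s\<close> \<open>s \<le> tb\<close> \<open>0 < m\<close> by simp
    finally show "\<epsilon> * exp (k * k * (s - ta)) \<le> v x0 s - v (2 * x1 - x0) s" .
  next
    fix y assume "x0 \<le> y" "y < x0 + r"
    moreover have "\<epsilon> \<le> m / 2"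
      using \<open>0 < m\<close> \<open>0 < k\<close> assms by (simp add: \<epsilon>_def S_def mult_left_le_one_le)
    ultimately show "\<epsilon> \<le> v y ta - v (2 * x1 - y) ta"
      using near[of y] by simp
  qed (use assms \<open>0 \<le> L\<close> lip \<open>0 < k\<close> \<open>0 < \<epsilon>\<close> in simp_all)
  moreover have "exp (k * k * S) * (- k * exp (- k * (x1 - x0))) + k * exp (- k * r) < 0"
    by (rule hopf_barrier_slope_neg) (use \<open>0 < k\<close> \<open>0 < r\<close> assms in \<open>simp_all add: k_def S_def\<close>)
  then have "\<epsilon> * (exp (k * k * S) * (- k * exp (- k * (x1 - x0))) + k * exp (- k * r)) < 0"
    using \<open>0 < \<epsilon>\<close> by (simp add: mult_pos_neg)
  ultimately have "2 * exp (L * S) * vx x1 tb < 0"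
    by linarith
  then show ?thesis
    by (simp add: mult_less_0_iff)
qed

lemma reflection_coincides_before_critical:
  assumes "x0 < x1" "vx x1 t1 = 0" "t \<le> t1"
  shows "v x0 t = v (2 * x1 - x0) t"
proof (rule ccontr)
  assume ne: "v x0 t \<noteq> v (2 * x1 - x0) t"
  have pos: "v (2 * x1 - x0) s < v x0 s" if "t \<le> s" for s
  proof -
    have "v x0 s \<noteq> v (2 * x1 - x0) s"
      using reflection_coincidence_backward[OF \<open>x0 < x1\<close> _ that] ne by blast
    moreover have "v (2 * x1 - x0) s \<le> v x0 s"
      using reflection_le[of x1 x0 s] \<open>x0 < x1\<close> by simp
    ultimately show ?thesis
      by simp
  qed
  \<comment> \<open>Hopf's lemma needs a time interval of positive length ending at t1, even if t = t1.\<close>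
  have cont: "isCont (\<lambda>s. v x0 s - v (2 * x1 - x0) s) t"
    using DERIV_isCont[OF DERIV_diff[OF dt dt]] .
  have "0 < v x0 t - v (2 * x1 - x0) t"
    using pos[of t] by simp
  then obtain \<delta> where "0 < \<delta>"
    and near: "\<And>s. \<bar>s - t\<bar> < \<delta> \<Longrightarrow> 0 < v x0 s - v (2 * x1 - x0) s"
    using isCont_gt_on_ball[OF cont] by blast
  have "vx x1 t1 < 0"
  proof (rule hopf_reflection[OF \<open>x0 < x1\<close>, of "t - \<delta> / 2"])
    show "t - \<delta> / 2 < t1"
      using \<open>0 < \<delta>\<close> \<open>t \<le> t1\<close> by simp
    fix s assume "t - \<delta> / 2 \<le> s" "s \<le> t1"
    show "v (2 * x1 - x0) s < v x0 s"
    proof (cases "s < t")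
      case True
      then have "\<bar>s - t\<bar> < \<delta>"
        using \<open>t - \<delta> / 2 \<le> s\<close> \<open>0 < \<delta>\<close> by (simp add: abs_less_iff)
      then show ?thesis
        using near[of s] by simp
    next
      case False
      then show ?thesis
        using pos[of s] by simp
    qed
  qed
  with \<open>vx x1 t1 = 0\<close> show False
    by simp
qed

lemma constant_between_reflection:
  assumes "x0 < x1" "vx x1 t1 = 0" "t \<le> t1" "x0 \<le> y" "y \<le> 2 * x1 - x0"
  shows "v y t = v x0 t"
proof -
  have "v y t \<le> v x0 t"
    using antitone_right[of x0 y t] assms by simp
  moreover have "v (2 * x1 - x0) t \<le> v y t"
    using antitone_right[of y "2 * x1 - x0" t] assms by simp
  ultimately show ?thesis
    using reflection_coincides_before_critical[OF assms(1-3)] by simp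
qed

lemma constant_on_doubled_interval:
  assumes "x0 < x1" "vx x1 t1 = 0"
  shows "t \<le> t1 \<Longrightarrow> x0 \<le> y \<Longrightarrow> y \<le> x0 + 2 ^ n * (x1 - x0) \<Longrightarrow> v y t = v x0 t"
proof (induction n arbitrary: t y)
  case 0
  then show ?case
    using constant_between_reflection[OF assms 0(1,2)] 0(3) \<open>x0 < x1\<close> by simp
next
  case (Suc n)
  define x2 where "x2 = x0 + 2 ^ n * (x1 - x0)"
  have "x0 < x2"
    using assms by (simp add: x2_def)
  have const: "v y t1 = v x0 t1" if "x0 \<le> y" "y \<le> x2" for y
    using Suc.IH[OF order_refl that(1)] that(2) by (simp add: x2_def)
  \<comment> \<open>v(., t1) is constant on [x0, x2] and nonincreasing beyond, so x2 is critical as well.\<close>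
  have "vx x2 t1 = 0"
  proof (rule DERIV_local_max[OF dx, of "x2 - x0"])
    show "\<forall>y. \<bar>x2 - y\<bar> < x2 - x0 \<longrightarrow> v y t1 \<le> v x2 t1"
    proof (intro allI impI)
      fix y assume "\<bar>x2 - y\<bar> < x2 - x0"
      then have "x0 < y"
        by (simp add: abs_less_iff)
      show "v y t1 \<le> v x2 t1"
      proof (cases "y \<le> x2")
        case True
        then show ?thesis
          using const[of y] const[of x2] \<open>x0 < y\<close> \<open>x0 < x2\<close> by simp
      next
        case False
        then show ?thesis
          using antitone_right[of x2 y t1] \<open>x0 < x2\<close> by simp
      qed
    qed
  qed (use \<open>x0 < x2\<close> in simp)
  moreover have "2 * x2 - x0 = x0 + 2 ^ Suc n * (x1 - x0)"
    by (simp add: x2_def algebra_simps)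
  ultimately show ?case
    using constant_between_reflection[OF \<open>x0 < x2\<close> _ Suc.prems(1,2)] Suc.prems(3) by simp
qed

lemma constant_before_critical:
  assumes "x0 < x1" "vx x1 t1 = 0" "t \<le> t1"
  shows "v y t = v x0 t"
proof -
  obtain n where "\<bar>y - x0\<bar> / (x1 - x0) < 2 ^ n"
    using real_arch_pow[of 2] by auto
  then have "\<bar>y - x0\<bar> \<le> 2 ^ n * (x1 - x0)"
    using assms by (simp add: field_simps)
  then have "y \<le> x0 + 2 ^ n * (x1 - x0)" "2 * x0 - y \<le> x0 + 2 ^ n * (x1 - x0)"
    by (simp_all add: abs_le_iff)
  then show ?thesis
  proof (cases "x0 \<le> y")
    case True
    show ?thesis
      by (rule constant_on_doubled_interval[OF assms(1,2,3) True \<open>y \<le> x0 + 2 ^ n * (x1 - x0)\<close>])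
  next
    case False
    then have "v (2 * x0 - y) t = v x0 t"
      using constant_on_doubled_interval[OF assms(1,2,3), of "2 * x0 - y" n]
        \<open>2 * x0 - y \<le> x0 + 2 ^ n * (x1 - x0)\<close> by simp
    then show ?thesis
      using symmetric[of y t] by simp
  qed
qed

lemma decreasing_or_homogeneous:
  "(\<forall>x t. x0 < x \<longrightarrow> vx x t < 0) \<or> (\<exists>g. \<forall>x t. v x t = g t)"
proof (cases "\<exists>x1 t1. x0 < x1 \<and> vx x1 t1 = 0")
  case True
  then obtain x1 t1 where critical: "x0 < x1" "vx x1 t1 = 0"
    by blast
  have "v x t = v 0 t" for x t
  proof (cases "t \<le> t1")
    case True
    then show ?thesis
      using constant_before_critical[OF critical True, of x]
        constant_before_critical[OF critical True, of 0] by simp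
  next
    case False
    have "v y t1 = v 0 t1" for y
      using constant_before_critical[OF critical order_refl, of y]
        constant_before_critical[OF critical order_refl, of 0] by simp
    then show ?thesis
      by (rule spatially_constant_forward) (use False in simp)
  qed
  then show ?thesis
    by blast
next
  case False
  have "vx x t < 0" if "x0 < x" for x t
  proof -
    have "vx x t \<noteq> 0"
      using False that by blast
    then show ?thesis
      using nonincreasing[OF that, of t] by simp
  qed
  then show ?thesis
    by blast
qed

end

theorem entire_solution_sym_decreasing_or_homogeneous:
  assumes "C1_in_u f" "entire_solution f v" "\<And>x t. v x t \<le> M"
    and "\<And>x t. v (2 * x0 - x) t = v x t"
    and "\<And>x t. x0 < x \<Longrightarrow> deriv (\<lambda>y. v y t) x \<le> 0"
  shows "sym_decreasing v x0 \<or> (\<exists>g. \<forall>x t. v x t = g t)"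
proof -
  obtain vx vxx vt where sol: "\<forall>(x, t)\<in>UNIV.
        ((\<lambda>y. v y t) has_real_derivative vx x t) (at x)
      \<and> ((\<lambda>y. vx y t) has_real_derivative vxx x t) (at x)
      \<and> ((\<lambda>s. v x s) has_real_derivative vt x t) (at t)
      \<and> vt x t = vxx x t + f t (v x t) \<and> 0 \<le> v x t"
    and cont: "continuous_on UNIV (\<lambda>(x, t). v x t)"
    using assms(2) unfolding entire_solution_def classical_solution_on_def by blast
  have deriv: "deriv (\<lambda>y. v y t) x = vx x t" for x t
    using sol by (auto intro: DERIV_imp_deriv)
  interpret symmetric_solution f v vx vxx vt M x0
  proof
    show "((\<lambda>y. v y t) has_real_derivative vx x t) (at x)"
      "((\<lambda>y. vx y t) has_real_derivative vxx x t) (at x)"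
      "((\<lambda>s. v x s) has_real_derivative vt x t) (at t)"
      "vt x t = vxx x t + f t (v x t)" "0 \<le> v x t" for x t
      using sol by blast+
    show "continuous_on UNIV (\<lambda>p. v (fst p) (snd p))"
      using cont by (simp add: case_prod_beta)
    show "x0 < x \<Longrightarrow> vx x t \<le> 0" for x t
      using assms(5)[of x t] by (simp add: deriv)
    show "v x t \<le> M" "v (2 * x0 - x) t = v x t" for x t
      by (fact assms(3), fact assms(4))
  qed (fact assms(1))
  show ?thesis
    using decreasing_or_homogeneous symmetric unfolding sym_decreasing_def deriv by blast
qed

lemma omega_tilde_le:
  assumes "0 < T" and u_bound: "\<And>x t. 0 < t \<Longrightarrow> \<bar>u x t\<bar> \<le> M" and "v \<in> omega_tilde f T u"
  shows "v x t \<le> M"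
proof (rule field_le_epsilon)
  fix e :: real assume "0 < e"
  obtain k :: "nat \<Rightarrow> nat" where "filterlim k at_top sequentially"
    and conv: "\<And>K e. compact K \<Longrightarrow> 0 < e \<Longrightarrow>
      \<forall>\<^sub>F j in sequentially. \<forall>(x, t)\<in>K. \<bar>u x (t + real (k j) * T) - v x t\<bar> < e"
    using assms(3) unfolding omega_tilde_def by blast
  obtain N :: nat where N: "\<bar>t\<bar> < real N * T"
    using reals_Archimedean3[OF \<open>0 < T\<close>] by blast
  have "\<forall>\<^sub>F j in sequentially. N \<le> k j"
    using \<open>filterlim k at_top sequentially\<close> by (simp add: filterlim_at_top)
  moreover have "\<forall>\<^sub>F j in sequentially. \<bar>u x (t + real (k j) * T) - v x t\<bar> < e"
    using conv[of "{(x, t)}" e] \<open>0 < e\<close> by simp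
  ultimately have "\<forall>\<^sub>F j in sequentially. N \<le> k j \<and> \<bar>u x (t + real (k j) * T) - v x t\<bar> < e"
    by (rule eventually_conj)
  then obtain j where "N \<le> k j" and close: "\<bar>u x (t + real (k j) * T) - v x t\<bar> < e"
    using eventually_happens'[OF trivial_limit_sequentially] by blast
  then have "real N * T \<le> real (k j) * T"
    using \<open>0 < T\<close> by (simp add: mult_right_mono)
  then have "0 < t + real (k j) * T"
    using N by linarith
  then show "v x t \<le> M + e"
    using u_bound[of "t + real (k j) * T" x] close by linarith
qed

theorem lemma2p10:
  fixes T :: real and f :: "real \<Rightarrow> real \<Rightarrow> real"
    and u0 :: "real \<Rightarrow> real" and u :: "real \<Rightarrow> real \<Rightarrow> real" and x0 :: real
  assumes "T > 0"
    and "locally_hoelder_on (UNIV \<times> {0..}) f"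
    and "C1_in_u f"
    and "\<forall>t. f t 0 = 0"
    and "\<forall>t w. w \<ge> 0 \<longrightarrow> f (t + T) w = f t w"
    and "u0 \<in> borel_measurable lborel"
    and "bounded (range u0)"
    and "\<forall>x. u0 x \<ge> 0"
    and "\<exists>R. \<forall>x. \<bar>x\<bar> > R \<longrightarrow> u0 x = 0"
    and "solves_cauchy f u0 u"
    and "\<exists>M. \<forall>x t. t > 0 \<longrightarrow> \<bar>u x t\<bar> \<le> M"
    and "\<forall>v\<in>omega_tilde f T u.
           (\<forall>x t. v (2 * x0 - x) t = v x t)
         \<and> (\<forall>x t. x < x0 \<longrightarrow> deriv (\<lambda>y. v y t) x \<ge> 0)
         \<and> (\<forall>x t. x > x0 \<longrightarrow> deriv (\<lambda>y. v y t) x \<le> 0)"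
  shows "\<forall>v\<in>omega_tilde f T u. sym_decreasing v x0 \<or> (\<exists>g. \<forall>x t. v x t = g t)"
proof
  fix v assume v: "v \<in> omega_tilde f T u"
  obtain M where M: "\<And>x t. 0 < t \<Longrightarrow> \<bar>u x t\<bar> \<le> M"
    using assms(11) by blast
  show "sym_decreasing v x0 \<or> (\<exists>g. \<forall>x t. v x t = g t)"
  proof (rule entire_solution_sym_decreasing_or_homogeneous[OF assms(3)])
    show "entire_solution f v"
      using v by (simp add: omega_tilde_def)
    show "v x t \<le> M" for x t
      using omega_tilde_le[OF assms(1) M v] .
    show "v (2 * x0 - x) t = v x t" "x0 < x \<Longrightarrow> deriv (\<lambda>y. v y t) x \<le> 0" for x t
      using assms(12) v by auto
  qed
qed

end
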